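(* Let $f\in\mathbb{R}[x]$ be a polynomial of degree $n$ with $n$ simple roots, and let $g\in\mathbb{R}[x]$ have degree $<n$ and satisfy $g(\xi)>0$ at every real root $\xi$ of $f$. Then there exists a pair $(Q,q)$ with $Q\in\mathbb{R}^{n\times n}$ symmetric positive definite and $q\in\mathbb{R}[x]$ of degree $\le n-2$ such that $g=\mathbf{x}^TQ\,\mathbf{x}+q\,f$. In particular $Q$ lies in the interior of the cone of $n\times n$ real symmetric positive semidefinite matrices.
   Context: $\mathbf{x}=[1,x,\dots,x^{n-1}]^T$ denotes the column vector of monomials of degree $<n$. *)

theory Defs
  imports Complex_Main "HOL-Computational_Algebra.Polynomial"
begin

text \<open>n x n real matrices are represented as functions nat => nat => real,
  only the entries with indices below n being relevant.\<close>

definition sym_mat :: "nat \<Rightarrow> (nat \<Rightarrow> nat \<Rightarrow> real) \<Rightarrow> bool" where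
  "sym_mat n Q \<longleftrightarrow> (\<forall>i<n. \<forall>j<n. Q i j = Q j i)"

definition pos_def_mat :: "nat \<Rightarrow> (nat \<Rightarrow> nat \<Rightarrow> real) \<Rightarrow> bool" where
  "pos_def_mat n Q \<longleftrightarrow>
     (\<forall>v :: nat \<Rightarrow> real. (\<exists>i<n. v i \<noteq> 0) \<longrightarrow> (\<Sum>i<n. \<Sum>j<n. v i * Q i j * v j) > 0)"

text \<open>The polynomial x^T Q x where x = [1, x, ..., x^(n-1)]^T.\<close>
definition gram_poly :: "nat \<Rightarrow> (nat \<Rightarrow> nat \<Rightarrow> real) \<Rightarrow> real poly" where
  "gram_poly n Q = (\<Sum>i<n. \<Sum>j<n. monom (Q i j) (i + j))"

end

theory Submission
  imports Defs
begin

text \<open>Subtract from g the Gram polynomial of e I, i.e. e (1 + x^2 + ... + x^(2n-2)), with e > 0 so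
  small that the difference h stays positive at the real roots of f. At the n distinct complex
  roots of f choose square roots of h compatibly with complex conjugation and interpolate them by
  a real polynomial p of degree < n. Then g - e (1 + ... + x^(2n-2)) - p^2 vanishes at all roots of f,
  hence is a multiple q f, and since p^2 is the Gram polynomial of c c^T for the coefficient vector
  c of p, Q = e I + c c^T is positive definite; comparing degrees bounds deg q by n - 2.\<close>

abbreviation complex_poly :: "real poly \<Rightarrow> complex poly" where
  "complex_poly p \<equiv> map_poly of_real p"

lemma complex_poly_add: "complex_poly (p + q) = complex_poly p + complex_poly q"
  by (intro poly_eqI) (simp add: coeff_map_poly)

lemma complex_poly_diff: "complex_poly (p - q) = complex_poly p - complex_poly q"
  by (intro poly_eqI) (simp add: coeff_map_poly)

lemma complex_poly_mult: "complex_poly (p * q) = complex_poly p * complex_poly q"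
  by (intro poly_eqI) (simp add: coeff_map_poly coeff_mult)

lemma poly_complex_poly_of_real: "poly (complex_poly p) (of_real x) = of_real (poly p x)"
  by (induction p) (auto simp: map_poly_pCons)

lemma poly_complex_poly_cnj: "poly (complex_poly p) (cnj z) = cnj (poly (complex_poly p) z)"
  by (simp add: poly_cnj_real coeff_map_poly)

lemma poly_interpolation_exists:
  fixes Z :: "'a :: field set" and s :: "'a \<Rightarrow> 'a"
  assumes "finite Z" "Z \<noteq> {}"
  shows "\<exists>L. degree L < card Z \<and> (\<forall>z\<in>Z. poly L z = s z)"
proof -
  define P where "P z = (\<Prod>w\<in>Z-{z}. [:-w, 1:])" for z
  have poly_P: "poly (P z) x = (\<Prod>w\<in>Z-{z}. x - w)" for z x
    unfolding P_def by (simp add: poly_prod)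
  have degree_P: "degree (P z) < card Z" if "z \<in> Z" for z
  proof -
    have "degree (P z) \<le> card (Z - {z})"
      using degree_prod_sum_le[of "Z - {z}" "\<lambda>w. [:-w, 1:]"] assms(1) by (simp add: P_def o_def)
    also have "\<dots> < card Z" using assms that by (meson card_Diff1_less)
    finally show ?thesis .
  qed
  define L where "L = (\<Sum>z\<in>Z. smult (s z / poly (P z) z) (P z))"
  have "degree L < card Z"
    unfolding L_def using degree_P assms
    by (intro degree_sum_less) (auto intro: le_less_trans[OF degree_smult_le] simp: card_gt_0_iff)
  moreover have "poly L y = s y" if "y \<in> Z" for y
  proof -
    have "poly L y = (\<Sum>z\<in>Z. s z / poly (P z) z * poly (P z) y)"
      unfolding L_def by (simp add: poly_sum)
    also have "\<dots> = (\<Sum>z\<in>Z. if z = y then s y else 0)"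
      using assms(1) that by (intro sum.cong) (auto simp: poly_P)
    also have "\<dots> = s y" using assms(1) that by simp
    finally show ?thesis .
  qed
  ultimately show ?thesis by blast
qed

text \<open>Conjugation-symmetric data are interpolated by the real part of any complex interpolant.\<close>
lemma real_poly_interpolation_exists:
  fixes Z :: "complex set" and s :: "complex \<Rightarrow> complex"
  assumes "finite Z" "Z \<noteq> {}"
    and "\<And>z. z \<in> Z \<Longrightarrow> cnj z \<in> Z" "\<And>z. z \<in> Z \<Longrightarrow> s (cnj z) = cnj (s z)"
  shows "\<exists>p. degree p < card Z \<and> (\<forall>z\<in>Z. poly (complex_poly p) z = s z)"
proof -
  obtain L where L: "degree L < card Z" "\<forall>z\<in>Z. poly L z = s z"
    using poly_interpolation_exists[OF assms(1,2)] by blast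
  define p where "p = map_poly Re L"
  have "degree p \<le> degree L"
    unfolding p_def by (rule degree_le) (simp add: coeff_map_poly coeff_eq_0)
  moreover have "complex_poly p = smult (1/2) (L + map_poly cnj L)"
    unfolding p_def by (intro poly_eqI) (simp add: coeff_map_poly complex_add_cnj)
  then have "poly (complex_poly p) z = s z" if "z \<in> Z" for z
    using L(2) assms(3,4) that by simp
  ultimately show ?thesis using L(1) by (intro exI[of _ p]) auto
qed

lemma conjugation_symmetric_sqrt_exists:
  fixes Z :: "complex set" and H :: "complex \<Rightarrow> complex"
  assumes "\<And>w. H (cnj w) = cnj (H w)" and "\<And>w. w \<in> Z \<Longrightarrow> Im w = 0 \<Longrightarrow> Re (H w) \<ge> 0"
  shows "\<exists>s. \<forall>w\<in>Z. s (cnj w) = cnj (s w) \<and> s w ^ 2 = H w"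
proof -
  define s where "s w = (if Im w \<ge> 0 then csqrt (H w) else cnj (csqrt (H (cnj w))))" for w
  have "s (cnj w) = cnj (s w)" if "w \<in> Z" for w
  proof (cases "Im w = 0")
    case True
    then have "cnj w = w" by (simp add: complex_eq_iff)
    then have "Im (H w) = 0" using assms(1)[of w] by (metis Reals_cnj_iff complex_is_Real_iff)
    then show ?thesis using True assms(2)[OF that] \<open>cnj w = w\<close> by (simp add: s_def)
  qed (auto simp: s_def assms(1))
  moreover have "s w ^ 2 = H w" for w
    by (simp add: s_def assms(1) flip: complex_cnj_power)
  ultimately show ?thesis by blast
qed

lemma real_poly_sqrt_at_roots_exists:
  fixes f h :: "real poly"
  assumes "f \<noteq> 0" "{z. poly (complex_poly f) z = 0} \<noteq> {}"
    and "\<And>x. poly f x = 0 \<Longrightarrow> poly h x \<ge> 0"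
  shows "\<exists>p. degree p < card {z. poly (complex_poly f) z = 0} \<and>
    (\<forall>z. poly (complex_poly f) z = 0 \<longrightarrow> poly (complex_poly h) z = poly (complex_poly p) z ^ 2)"
proof -
  define Z where "Z = {z. poly (complex_poly f) z = 0}"
  have "finite Z"
    unfolding Z_def using assms(1) by (intro poly_roots_finite) (simp add: map_poly_eq_0_iff)
  have real_root_nonneg: "Re (poly (complex_poly h) w) \<ge> 0" if "w \<in> Z" "Im w = 0" for w
  proof -
    have w: "w = of_real (Re w)" using that(2) by (simp add: complex_eq_iff)
    have "of_real (poly f (Re w)) = poly (complex_poly f) w"
      by (subst w) (simp only: poly_complex_poly_of_real)
    then have "poly f (Re w) = 0" using that(1) unfolding Z_def by simp
    moreover have "poly (complex_poly h) w = of_real (poly h (Re w))"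
      by (subst w) (simp only: poly_complex_poly_of_real)
    ultimately show ?thesis using assms(3) by simp
  qed
  from conjugation_symmetric_sqrt_exists[of "poly (complex_poly h)", OF poly_complex_poly_cnj real_root_nonneg]
  obtain s where s: "\<forall>w\<in>Z. s (cnj w) = cnj (s w) \<and> s w ^ 2 = poly (complex_poly h) w" ..
  have "Z \<noteq> {}" using assms(2) unfolding Z_def .
  moreover have "cnj z \<in> Z" if "z \<in> Z" for z
    using that unfolding Z_def by (simp add: poly_complex_poly_cnj)
  ultimately obtain p where "degree p < card Z" "\<And>z. z \<in> Z \<Longrightarrow> poly (complex_poly p) z = s z"
    using real_poly_interpolation_exists[OF \<open>finite Z\<close>, of s] s by blast
  with s have "\<exists>p. degree p < card Z \<and> (\<forall>z\<in>Z. poly (complex_poly h) z = poly (complex_poly p) z ^ 2)"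
    by auto
  then show ?thesis unfolding Z_def by simp
qed

text \<open>Dividing by f leaves a remainder that vanishes at more points than its degree allows.\<close>
lemma dvd_if_vanishes_at_simple_roots:
  fixes f r :: "real poly"
  assumes "f \<noteq> 0" "card {z. poly (complex_poly f) z = 0} = degree f"
    and "\<And>z. poly (complex_poly f) z = 0 \<Longrightarrow> poly (complex_poly r) z = 0"
  shows "f dvd r"
proof (rule ccontr)
  define Z where "Z = {z. poly (complex_poly f) z = 0}"
  define m where "m = r mod f"
  assume "\<not> f dvd r"
  then have "m \<noteq> 0" unfolding m_def by (simp add: mod_eq_0_iff_dvd)
  have "complex_poly r = complex_poly f * complex_poly (r div f) + complex_poly m"
    unfolding m_def complex_poly_mult[symmetric] complex_poly_add[symmetric] by simp
  then have "Z \<subseteq> {z. poly (complex_poly m) z = 0}"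
    using assms(3) unfolding Z_def by auto
  then have "card Z \<le> card {z. poly (complex_poly m) z = 0}"
    using \<open>m \<noteq> 0\<close> by (intro card_mono poly_roots_finite) (auto simp: map_poly_eq_0_iff)
  also have "\<dots> \<le> degree m"
    using \<open>m \<noteq> 0\<close> card_poly_roots_bound[of "complex_poly m"] by (simp add: map_poly_eq_0_iff degree_map_poly)
  also have "\<dots> < degree f"
    using degree_mod_less[OF assms(1), of r] \<open>m \<noteq> 0\<close> unfolding m_def by auto
  finally show False using assms(2) unfolding Z_def by simp
qed

lemma pos_scale_below_exists:
  fixes a b :: "'a \<Rightarrow> real"
  assumes "finite R" "\<And>x. x \<in> R \<Longrightarrow> a x > 0"
  shows "\<exists>e>0. \<forall>x\<in>R. e * b x < a x"
proof -
  have "\<forall>\<^sub>F e in at_right 0. \<forall>x\<in>R. e * b x < a x"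
  proof (rule eventually_ball_finite[OF assms(1)], rule ballI)
    fix x assume "x \<in> R"
    have "((\<lambda>e. e * b x) \<longlongrightarrow> 0 * b x) (at_right 0)"
      by (intro tendsto_intros)
    then show "\<forall>\<^sub>F e in at_right 0. e * b x < a x"
      using assms(2)[OF \<open>x \<in> R\<close>] by (intro order_tendstoD(2)) auto
  qed
  then obtain c :: real where "c > 0" "\<And>e. 0 < e \<Longrightarrow> e < c \<Longrightarrow> \<forall>x\<in>R. e * b x < a x"
    unfolding eventually_at_right_field by auto
  moreover have "c / 2 > 0" "c / 2 < c" using \<open>c > 0\<close> by simp_all
  ultimately show ?thesis by blast
qed

lemma gram_poly_add: "gram_poly n (\<lambda>i j. A i j + B i j) = gram_poly n A + gram_poly n B"
  by (simp add: gram_poly_def add_monom[symmetric] sum.distrib)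

lemma gram_poly_diagonal: "gram_poly n (\<lambda>i j. if i = j then e else 0) = (\<Sum>k<n. monom e (2 * k))"
  unfolding gram_poly_def
proof (rule sum.cong[OF refl])
  fix i assume "i \<in> {..<n}"
  then have "(\<Sum>j<n. monom (if i = j then e else 0) (i + j)) = (\<Sum>j<n. if j = i then monom e (i + j) else 0)"
    by (intro sum.cong) auto
  also have "\<dots> = monom e (2 * i)" using \<open>i \<in> {..<n}\<close> by (simp add: mult_2)
  finally show "(\<Sum>j<n. monom (if i = j then e else 0) (i + j)) = monom e (2 * i)" .
qed

lemma gram_poly_outer_coeffs:
  fixes p :: "real poly"
  assumes "degree p < n"
  shows "gram_poly n (\<lambda>i j. coeff p i * coeff p j) = p * p"
proof -
  have "{..n - 1} = {..<n}" using assms by auto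
  then have p: "p = (\<Sum>i<n. monom (coeff p i) i)"
    using poly_as_sum_of_monoms'[of p "n - 1"] assms by simp
  have "p * p = (\<Sum>i<n. monom (coeff p i) i) * (\<Sum>j<n. monom (coeff p j) j)"
    by (simp only: p[symmetric])
  also have "\<dots> = (\<Sum>i<n. \<Sum>j<n. monom (coeff p i) i * monom (coeff p j) j)"
    by (rule sum_product)
  finally show ?thesis by (simp add: gram_poly_def mult_monom)
qed

lemma degree_gram_poly: "degree (gram_poly n Q) \<le> 2 * n - 2"
  unfolding gram_poly_def
  by (intro degree_sum_le) (auto intro!: order.trans[OF degree_monom_le])

lemma pos_def_mat_diagonal_plus_outer:
  fixes e :: real and c :: "nat \<Rightarrow> real"
  assumes "e > 0"
  shows "pos_def_mat n (\<lambda>i j. (if i = j then e else 0) + c i * c j)"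
  unfolding pos_def_mat_def
proof (intro allI impI)
  fix v :: "nat \<Rightarrow> real" assume "\<exists>i<n. v i \<noteq> 0"
  then obtain i0 where i0: "i0 < n" "v i0 \<noteq> 0" by blast
  have diagonal: "(\<Sum>i<n. \<Sum>j<n. v i * (if i = j then e else 0) * v j) = (\<Sum>i<n. e * (v i)\<^sup>2)"
    by (intro sum.cong refl) (simp add: if_distrib if_distribR power2_eq_square cong: if_cong)
  have outer: "(\<Sum>i<n. \<Sum>j<n. v i * (c i * c j) * v j) = (\<Sum>i<n. v i * c i)\<^sup>2"
    unfolding power2_eq_square sum_product by (simp add: algebra_simps)
  have "0 < e * (v i0)\<^sup>2" using i0 assms by simp
  also have "\<dots> \<le> (\<Sum>i<n. e * (v i)\<^sup>2)"
    using i0 assms by (intro member_le_sum) auto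
  also have "\<dots> \<le> (\<Sum>i<n. \<Sum>j<n. v i * ((if i = j then e else 0) + c i * c j) * v j)"
    by (simp add: distrib_left distrib_right sum.distrib diagonal outer)
  finally show "0 < (\<Sum>i<n. \<Sum>j<n. v i * ((if i = j then e else 0) + c i * c j) * v j)" .
qed

theorem mainTheorem3:
  fixes f g :: "real poly" and n :: nat
  assumes "degree f = n"
    and "card {z :: complex. poly (map_poly of_real f) z = 0} = n"
    and "degree g < n"
    and "\<And>\<xi> :: real. poly f \<xi> = 0 \<Longrightarrow> poly g \<xi> > 0"
  shows "\<exists>(Q :: nat \<Rightarrow> nat \<Rightarrow> real) (q :: real poly).
           sym_mat n Q \<and> pos_def_mat n Q \<and> (q = 0 \<or> degree q + 2 \<le> n) \<and>
           g = gram_poly n Q + q * f"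
proof -
  have "n > 0" using assms(3) by simp
  then have "f \<noteq> 0" using assms(1) by auto
  obtain e :: real where "e > 0" and e: "\<forall>x\<in>{x. poly f x = 0}. e * (\<Sum>k<n. x ^ (2 * k)) < poly g x"
    using pos_scale_below_exists[OF poly_roots_finite[OF \<open>f \<noteq> 0\<close>], of "poly g" "\<lambda>x. \<Sum>k<n. x ^ (2 * k)"] assms(4)
    by auto
  define h where "h = g - gram_poly n (\<lambda>i j. if i = j then e else 0)"
  have "poly h x = poly g x - e * (\<Sum>k<n. x ^ (2 * k))" for x
    by (simp add: h_def gram_poly_diagonal poly_sum poly_monom sum_distrib_left)
  then have "poly h x \<ge> 0" if "poly f x = 0" for x
    using e that by (simp add: less_imp_le)
  moreover have "{z. poly (complex_poly f) z = 0} \<noteq> {}" using assms(2) \<open>n > 0\<close> by (metis card.empty less_irrefl)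
  ultimately obtain p where "degree p < n" and p:
    "\<forall>z. poly (complex_poly f) z = 0 \<longrightarrow> poly (complex_poly h) z = poly (complex_poly p) z ^ 2"
    using real_poly_sqrt_at_roots_exists[OF \<open>f \<noteq> 0\<close>] unfolding assms(2) by blast
  define Q where "Q i j = (if i = j then e else 0) + coeff p i * coeff p j" for i j
  have "gram_poly n Q = gram_poly n (\<lambda>i j. if i = j then e else 0) + p * p"
    using gram_poly_add[of n "\<lambda>i j. if i = j then e else 0" "\<lambda>i j. coeff p i * coeff p j"]
      gram_poly_outer_coeffs[OF \<open>degree p < n\<close>] by (simp add: Q_def[abs_def])
  then have "g - gram_poly n Q = h - p * p" by (simp add: h_def)
  then have "f dvd g - gram_poly n Q"
    using p assms(1,2) \<open>f \<noteq> 0\<close>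
    by (intro dvd_if_vanishes_at_simple_roots) (simp_all add: complex_poly_diff complex_poly_mult power2_eq_square)
  then obtain q where q: "g - gram_poly n Q = q * f" by (metis dvd_def mult.commute)
  have "q = 0 \<or> degree q + 2 \<le> n"
  proof (cases "q = 0")
    case False
    then have "degree q + n = degree (g - gram_poly n Q)"
      using q \<open>f \<noteq> 0\<close> assms(1) by (simp add: degree_mult_eq)
    also have "\<dots> \<le> 2 * n - 2"
      using degree_diff_le_max[of g "gram_poly n Q"] degree_gram_poly[of n Q] assms(3) by linarith
    finally show ?thesis using \<open>n > 0\<close> by linarith
  qed simp
  moreover have "sym_mat n Q" by (simp add: sym_mat_def Q_def)
  moreover have "pos_def_mat n Q"
    unfolding Q_def using pos_def_mat_diagonal_plus_outer[OF \<open>e > 0\<close>] by simp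
  ultimately show ?thesis using q by (metis diff_add_cancel add.commute)
qed

end
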